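(* If a randomized predictor $f\in\Delta(\mathcal{H})$ is $\epsilon$-decision calibrated, i.e. $\max_{i\in[N]}\max_{j\in[d]}\max_{a\in A}|\mathbb{E}_{h\sim f}\mathbb{E}_{\mathcal{D}}[(y_j-h(x)_j)b_i(h(x),a)]|\le\epsilon$, then it has $2L|A|\epsilon$-swap-type regret: for all receivers $i,i'\in[N]$ and every map $\phi:A\to A$, $\mathbb{E}_{h\sim f}\mathbb{E}_{\mathcal{D}}\big[\sum_{a\in A}v_i(\phi(a),y)b_{i'}(h(x),a)\big]\le\mathbb{E}_{h\sim f}\mathbb{E}_{\mathcal{D}}\big[\sum_{a\in A}v_i(a,y)b_i(h(x),a)\big]+2L|A|\epsilon.$
   Context: Data $(x,y)\in\mathcal{X}\times[-1,1]^d$ drawn from $\mathcal{D}$; $\mathcal{H}$ is a class of functions $h:\mathcal{X}\to[-1,1]^d$, $\Delta(\mathcal{H})$ the distributions over it. All $N$ receivers share a common finite action set $A$; receiver $i$ has utility $v_i:A\times[-1,1]^d\to[0,1]$, linear in $y$, with $|v_i(a,y_1)-v_i(a,y_2)|\le L\|y_1-y_2\|_\infty$. Strict best response: $b_i(z,a)=1$ if $a=\arg\max_{a'\in A}v_i(a',z)$ (fixed deterministic tie-breaking), else $0$. *)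

theory Defs
  imports "HOL-Probability.Probability"
begin

definition cube :: "(real^'d) set" where
  "cube = {y. \<forall>j. \<bar>y $ j\<bar> \<le> 1}"

definition linf :: "real^'d \<Rightarrow> real" where
  "linf y = Max (range (\<lambda>j. \<bar>y $ j\<bar>))"

definition affine_on_cube :: "(real^'d \<Rightarrow> real) \<Rightarrow> bool" where
  "affine_on_cube g \<longleftrightarrow> (\<exists>c w. \<forall>y\<in>cube. g y = c + w \<bullet> y)"

text \<open>Best response with deterministic tie-breaking: among the maximisers,
  the least action with respect to the fixed linear order on the action type.\<close>
definition best_resp :: "('a::{finite,linorder} \<Rightarrow> real^'d \<Rightarrow> real) \<Rightarrow> real^'d \<Rightarrow> 'a" where
  "best_resp u z = Min {a. \<forall>a'. u a' z \<le> u a z}"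

definition br_ind :: "('a::{finite,linorder} \<Rightarrow> real^'d \<Rightarrow> real) \<Rightarrow> real^'d \<Rightarrow> 'a \<Rightarrow> real" where
  "br_ind u z a = (if a = best_resp u z then 1 else 0)"

end

theory Submission
  imports Defs
begin

text \<open>Write z = h(x) for the prediction and y for the label. Since v_i(b, -) is affine on the cube
  and L-Lipschitz for the sup-norm, its coefficient vector has l1-norm at most L, so
  E[(v_i(b, y) - v_i(b, z)) b_k(z, a)] is a combination of the calibration errors
  E[(y_j - z_j) b_k(z, a)] of total weight at most L. Hence decision calibration lets one replace
  y by z in each of the |A| terms on either side at a cost of L eps: for the deviation payoff with
  k = i' and for the best-response payoff with k = i. What remains is the pointwise inequality
  v_i(phi(br_i'(z)), z) <= v_i(br_i(z), z), true because br_i(z) maximises v_i(-, z).\<close>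

lemma best_resp_eq_iff:
  fixes u :: "'a::{finite,linorder} \<Rightarrow> real^'d \<Rightarrow> real"
  shows "best_resp u z = a \<longleftrightarrow> (\<forall>a'. u a' z \<le> u a z) \<and> (\<forall>b<a. \<exists>a'. u b z < u a' z)"
proof -
  define S where "S = {a. \<forall>a'. u a' z \<le> u a z}"
  have "Max (range (\<lambda>a. u a z)) \<in> range (\<lambda>a. u a z)"
    by (intro Max_in) auto
  then obtain a0 where "u a0 z = Max (range (\<lambda>a. u a z))"
    by (metis rangeE)
  then have "a0 \<in> S"
    unfolding S_def by simp
  then have "best_resp u z = a \<longleftrightarrow> a \<in> S \<and> (\<forall>b\<in>S. a \<le> b)"
    unfolding best_resp_def S_def[symmetric] by (intro Min_eq_iff) auto
  also have "\<dots> \<longleftrightarrow> (\<forall>a'. u a' z \<le> u a z) \<and> (\<forall>b<a. \<exists>a'. u b z < u a' z)"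
    unfolding S_def by (auto simp: not_le) (meson leI not_le)+
  finally show ?thesis .
qed

lemma best_resp_maximal:
  fixes u :: "'a::{finite,linorder} \<Rightarrow> real^'d \<Rightarrow> real"
  shows "u a z \<le> u (best_resp u z) z"
  using best_resp_eq_iff[of u z "best_resp u z"] by auto

lemma sum_mult_br_ind:
  fixes u :: "'a::{finite,linorder} \<Rightarrow> real^'d \<Rightarrow> real"
  shows "(\<Sum>a\<in>UNIV. g a * br_ind u z a) = g (best_resp u z)"
  unfolding br_ind_def by (simp add: if_distrib cong: if_cong)

lemma abs_br_ind_le: "\<bar>br_ind u z a\<bar> \<le> 1"
  unfolding br_ind_def by simp

lemma br_ind_measurable:
  fixes u :: "'a::{finite,linorder} \<Rightarrow> real^'d \<Rightarrow> real"
  assumes [measurable]: "\<And>a. (\<lambda>\<omega>. u a (Z \<omega>)) \<in> borel_measurable M"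
  shows "(\<lambda>\<omega>. br_ind u (Z \<omega>) a) \<in> borel_measurable M"
proof -
  have "br_ind u (Z \<omega>) a = (if (\<forall>a'. u a' (Z \<omega>) \<le> u a (Z \<omega>)) \<and>
      (\<forall>b<a. \<exists>a'. u b (Z \<omega>) < u a' (Z \<omega>)) then 1 else 0)" for \<omega>
    unfolding br_ind_def by (simp only: best_resp_eq_iff[symmetric] eq_commute)
  then show ?thesis
    by simp
qed

lemma affine_on_cube_sum_abs_le:
  fixes w :: "real^'d"
  assumes aff: "\<forall>y\<in>cube. g y = c + w \<bullet> y"
    and lip: "\<forall>y1\<in>cube. \<forall>y2\<in>cube. \<bar>g y1 - g y2\<bar> \<le> L * linf (y1 - y2)"
  shows "(\<Sum>j\<in>UNIV. \<bar>w $ j\<bar>) \<le> L"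
proof -
  \<comment> \<open>Compare g at the sign vector of w and at its negation.\<close>
  define s :: "real^'d" where "s = (\<chi> j. if w $ j \<ge> 0 then 1 else -1)"
  have s_cube: "s \<in> cube" "- s \<in> cube"
    unfolding cube_def s_def by auto
  have "w \<bullet> s = (\<Sum>j\<in>UNIV. \<bar>w $ j\<bar>)"
    unfolding inner_vec_def s_def by (intro sum.cong) auto
  then have "g s - g (- s) = 2 * (\<Sum>j\<in>UNIV. \<bar>w $ j\<bar>)"
    using aff s_cube by (simp add: inner_minus_right)
  moreover have "linf (s - - s) = 2"
  proof -
    have "(\<lambda>j. \<bar>(s - - s) $ j\<bar>) = (\<lambda>_. 2)"
      by (auto simp: s_def)
    then show ?thesis
      unfolding linf_def by (simp only:) simp
  qed
  ultimately have "2 * (\<Sum>j\<in>UNIV. \<bar>w $ j\<bar>) \<le> L * 2"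
    using lip s_cube by (metis abs_ge_self order_trans)
  then show ?thesis
    by simp
qed

lemma affine_on_cube_measurable:
  assumes "affine_on_cube g"
    and X: "X \<in> borel_measurable M" "\<forall>\<omega>\<in>space M. X \<omega> \<in> cube"
  shows "(\<lambda>\<omega>. g (X \<omega>)) \<in> borel_measurable M"
proof -
  obtain c w where aff: "\<forall>y\<in>cube. g y = c + w \<bullet> y"
    using assms(1) unfolding affine_on_cube_def by blast
  have "(\<lambda>\<omega>. c + w \<bullet> X \<omega>) \<in> borel_measurable M"
    using X(1) by measurable
  then show ?thesis
    by (rule measurable_cong[THEN iffD1, rotated]) (simp add: aff X(2))
qed

lemma affine_on_cube_bounded:
  assumes "affine_on_cube g"
  obtains K where "\<forall>y\<in>cube. \<bar>g y\<bar> \<le> K"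
proof -
  obtain c w where aff: "\<forall>y\<in>cube. g y = c + w \<bullet> y"
    using assms unfolding affine_on_cube_def by blast
  have "\<bar>g y\<bar> \<le> \<bar>c\<bar> + (\<Sum>j\<in>UNIV. \<bar>w $ j\<bar>)" if "y \<in> cube" for y
  proof -
    have "\<bar>w \<bullet> y\<bar> \<le> (\<Sum>j\<in>UNIV. \<bar>w $ j\<bar> * \<bar>y $ j\<bar>)"
      unfolding inner_vec_def inner_real_def abs_mult[symmetric] by (rule sum_abs)
    also have "\<dots> \<le> (\<Sum>j\<in>UNIV. \<bar>w $ j\<bar>)"
      using that unfolding cube_def by (intro sum_mono) (simp add: mult_left_le)
    finally show ?thesis
      using aff that abs_triangle_ineq[of c "w \<bullet> y"] by simp
  qed
  then show thesis
    using that by blast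
qed

lemma br_ind_affine_measurable:
  fixes u :: "'a::{finite,linorder} \<Rightarrow> real^'d \<Rightarrow> real"
  assumes "\<forall>a. affine_on_cube (u a)"
    and "Z \<in> borel_measurable M" "\<forall>\<omega>\<in>space M. Z \<omega> \<in> cube"
  shows "(\<lambda>\<omega>. br_ind u (Z \<omega>) a) \<in> borel_measurable M"
  using assms by (intro br_ind_measurable affine_on_cube_measurable) auto

lemma integral_sum_le_add_card:
  fixes F G :: "'a \<Rightarrow> 'b \<Rightarrow> real"
  assumes "finite A"
    and "\<And>a. a \<in> A \<Longrightarrow> integrable M (F a)" "\<And>a. a \<in> A \<Longrightarrow> integrable M (G a)"
    and "\<And>a. a \<in> A \<Longrightarrow> integral\<^sup>L M (F a) \<le> integral\<^sup>L M (G a) + \<delta>"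
  shows "(\<integral>\<omega>. (\<Sum>a\<in>A. F a \<omega>) \<partial>M) \<le> (\<integral>\<omega>. (\<Sum>a\<in>A. G a \<omega>) \<partial>M) + real (card A) * \<delta>"
proof -
  have "(\<integral>\<omega>. (\<Sum>a\<in>A. F a \<omega>) \<partial>M) = (\<Sum>a\<in>A. integral\<^sup>L M (F a))"
    using assms(2) by (simp add: integral_sum)
  also have "\<dots> \<le> (\<Sum>a\<in>A. integral\<^sup>L M (G a) + \<delta>)"
    using assms(4) by (rule sum_mono)
  also have "\<dots> = (\<integral>\<omega>. (\<Sum>a\<in>A. G a \<omega>) \<partial>M) + real (card A) * \<delta>"
    using assms(3) by (simp add: sum.distrib integral_sum)
  finally show ?thesis .
qed

lemma (in prob_space) integrable_affine_on_cube_mult: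
  assumes aff: "affine_on_cube g"
    and X: "X \<in> borel_measurable M" "\<forall>\<omega>\<in>space M. X \<omega> \<in> cube"
    and B: "B \<in> borel_measurable M" "\<forall>\<omega>\<in>space M. \<bar>B \<omega>\<bar> \<le> 1"
  shows "integrable M (\<lambda>\<omega>. g (X \<omega>) * B \<omega>)"
proof -
  obtain K where K: "\<forall>y\<in>cube. \<bar>g y\<bar> \<le> K"
    using affine_on_cube_bounded[OF aff] by blast
  have "norm (g (X \<omega>) * B \<omega>) \<le> K" if "\<omega> \<in> space M" for \<omega>
    using K X(2) B(2) that mult_mono[of "\<bar>g (X \<omega>)\<bar>" K "\<bar>B \<omega>\<bar>" 1]
    by (fastforce simp: abs_mult)
  moreover have "(\<lambda>\<omega>. g (X \<omega>) * B \<omega>) \<in> borel_measurable M"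
    using affine_on_cube_measurable[OF aff X] B(1) by (rule borel_measurable_times)
  ultimately show ?thesis
    by (intro integrable_const_bound[OF AE_I2])
qed

lemma (in prob_space) integrable_cube_diff_mult:
  assumes X: "X \<in> borel_measurable M" "\<forall>\<omega>\<in>space M. X \<omega> \<in> cube"
    and X': "X' \<in> borel_measurable M" "\<forall>\<omega>\<in>space M. X' \<omega> \<in> cube"
    and B: "B \<in> borel_measurable M" "\<forall>\<omega>\<in>space M. \<bar>B \<omega>\<bar> \<le> 1"
  shows "integrable M (\<lambda>\<omega>. (X \<omega> $ j - X' \<omega> $ j) * B \<omega>)"
proof (rule integrable_const_bound[OF AE_I2])
  show "norm ((X \<omega> $ j - X' \<omega> $ j) * B \<omega>) \<le> 2" if "\<omega> \<in> space M" for \<omega>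
  proof -
    have "\<bar>X \<omega> $ j\<bar> \<le> 1" "\<bar>X' \<omega> $ j\<bar> \<le> 1"
      using X(2) X'(2) that unfolding cube_def by auto
    then have "\<bar>X \<omega> $ j - X' \<omega> $ j\<bar> \<le> 2"
      by linarith
    then show ?thesis
      using B(2) that mult_mono[of "\<bar>X \<omega> $ j - X' \<omega> $ j\<bar>" 2 "\<bar>B \<omega>\<bar>" 1]
      by (simp add: abs_mult)
  qed
  show "(\<lambda>\<omega>. (X \<omega> $ j - X' \<omega> $ j) * B \<omega>) \<in> borel_measurable M"
    using measurable_compose[OF X(1) borel_measurable_nth]
      measurable_compose[OF X'(1) borel_measurable_nth] B(1) by measurable
qed

lemma (in prob_space) calibration_affine_integral_diff_le:
  assumes aff: "affine_on_cube g"
    and lip: "\<forall>y1\<in>cube. \<forall>y2\<in>cube. \<bar>g y1 - g y2\<bar> \<le> L * linf (y1 - y2)"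
    and Y: "Y \<in> borel_measurable M" "\<forall>\<omega>\<in>space M. Y \<omega> \<in> cube"
    and Z: "Z \<in> borel_measurable M" "\<forall>\<omega>\<in>space M. Z \<omega> \<in> cube"
    and B: "B \<in> borel_measurable M" "\<forall>\<omega>\<in>space M. \<bar>B \<omega>\<bar> \<le> 1"
    and calib: "\<forall>j. \<bar>\<integral>\<omega>. (Y \<omega> $ j - Z \<omega> $ j) * B \<omega> \<partial>M\<bar> \<le> \<epsilon>"
  shows "\<bar>(\<integral>\<omega>. g (Y \<omega>) * B \<omega> \<partial>M) - (\<integral>\<omega>. g (Z \<omega>) * B \<omega> \<partial>M)\<bar> \<le> L * \<epsilon>"
proof -
  obtain c w where gw: "\<forall>y\<in>cube. g y = c + w \<bullet> y"
    using aff unfolding affine_on_cube_def by blast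
  define I where "I j = (\<integral>\<omega>. (Y \<omega> $ j - Z \<omega> $ j) * B \<omega> \<partial>M)" for j
  have "(\<integral>\<omega>. g (Y \<omega>) * B \<omega> \<partial>M) - (\<integral>\<omega>. g (Z \<omega>) * B \<omega> \<partial>M)
      = (\<integral>\<omega>. (g (Y \<omega>) - g (Z \<omega>)) * B \<omega> \<partial>M)"
    using integrable_affine_on_cube_mult[OF aff Y B] integrable_affine_on_cube_mult[OF aff Z B]
    by (simp add: left_diff_distrib)
  also have "\<dots> = (\<integral>\<omega>. (\<Sum>j\<in>UNIV. w $ j * ((Y \<omega> $ j - Z \<omega> $ j) * B \<omega>)) \<partial>M)"
  proof (rule Bochner_Integration.integral_cong[OF refl])
    fix \<omega> assume "\<omega> \<in> space M"
    then have "g (Y \<omega>) - g (Z \<omega>) = w \<bullet> (Y \<omega> - Z \<omega>)"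
      using gw Y(2) Z(2) by (simp add: inner_diff_right)
    then show "(g (Y \<omega>) - g (Z \<omega>)) * B \<omega> = (\<Sum>j\<in>UNIV. w $ j * ((Y \<omega> $ j - Z \<omega> $ j) * B \<omega>))"
      by (simp add: inner_vec_def sum_distrib_right mult.assoc)
  qed
  also have "\<dots> = (\<Sum>j\<in>UNIV. w $ j * I j)"
    using integrable_cube_diff_mult[OF Y Z B] by (simp add: I_def)
  finally have diff: "(\<integral>\<omega>. g (Y \<omega>) * B \<omega> \<partial>M) - (\<integral>\<omega>. g (Z \<omega>) * B \<omega> \<partial>M)
      = (\<Sum>j\<in>UNIV. w $ j * I j)" .
  have "0 \<le> \<epsilon>"
    using calib abs_ge_zero order_trans by metis
  have "\<bar>\<Sum>j\<in>UNIV. w $ j * I j\<bar> \<le> (\<Sum>j\<in>UNIV. \<bar>w $ j\<bar> * \<epsilon>)"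
    using calib unfolding I_def
    by (intro order_trans[OF sum_abs sum_mono]) (simp add: abs_mult mult_left_mono)
  also have "\<dots> \<le> L * \<epsilon>"
    using affine_on_cube_sum_abs_le[OF gw lip] \<open>0 \<le> \<epsilon>\<close>
    by (simp add: sum_distrib_right[symmetric] mult_right_mono)
  finally show ?thesis
    unfolding diff .
qed

lemma (in prob_space) decision_calibrated_swap_regret_le:
  fixes u u' :: "'act::{finite,linorder} \<Rightarrow> real^'d \<Rightarrow> real" and \<phi> :: "'act \<Rightarrow> 'act"
  assumes Y: "Y \<in> borel_measurable M" "\<forall>\<omega>\<in>space M. Y \<omega> \<in> cube"
    and Z: "Z \<in> borel_measurable M" "\<forall>\<omega>\<in>space M. Z \<omega> \<in> cube"
    and u_aff: "\<forall>a. affine_on_cube (u a)"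
    and u_lip: "\<forall>a. \<forall>y1\<in>cube. \<forall>y2\<in>cube. \<bar>u a y1 - u a y2\<bar> \<le> L * linf (y1 - y2)"
    and u'_aff: "\<forall>a. affine_on_cube (u' a)"
    and calib: "\<forall>j a. \<bar>\<integral>\<omega>. (Y \<omega> $ j - Z \<omega> $ j) * br_ind u (Z \<omega>) a \<partial>M\<bar> \<le> \<epsilon>"
    and calib': "\<forall>j a. \<bar>\<integral>\<omega>. (Y \<omega> $ j - Z \<omega> $ j) * br_ind u' (Z \<omega>) a \<partial>M\<bar> \<le> \<epsilon>"
  shows "(\<integral>\<omega>. (\<Sum>a\<in>UNIV. u (\<phi> a) (Y \<omega>) * br_ind u' (Z \<omega>) a) \<partial>M)
    \<le> (\<integral>\<omega>. (\<Sum>a\<in>UNIV. u a (Y \<omega>) * br_ind u (Z \<omega>) a) \<partial>M) + 2 * L * real CARD('act) * \<epsilon>"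
proof -
  have br: "(\<lambda>\<omega>. br_ind w (Z \<omega>) a) \<in> borel_measurable M" "\<forall>\<omega>\<in>space M. \<bar>br_ind w (Z \<omega>) a\<bar> \<le> 1"
    if "\<forall>a. affine_on_cube (w a)" for w :: "'act \<Rightarrow> real^'d \<Rightarrow> real" and a
    using br_ind_affine_measurable[OF that Z] abs_br_ind_le by auto
  have int: "integrable M (\<lambda>\<omega>. u b (X \<omega>) * br_ind w (Z \<omega>) a)"
    if "X \<in> borel_measurable M" "\<forall>\<omega>\<in>space M. X \<omega> \<in> cube" "\<forall>a. affine_on_cube (w a)"
    for X and w :: "'act \<Rightarrow> real^'d \<Rightarrow> real" and a b
    using integrable_affine_on_cube_mult[OF _ that(1,2) br[OF that(3)]] u_aff by blast
  have swap: "(\<integral>\<omega>. u b (Y \<omega>) * br_ind w (Z \<omega>) a \<partial>M) \<le> (\<integral>\<omega>. u b (Z \<omega>) * br_ind w (Z \<omega>) a \<partial>M) + L * \<epsilon>"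
      "(\<integral>\<omega>. u b (Z \<omega>) * br_ind w (Z \<omega>) a \<partial>M) \<le> (\<integral>\<omega>. u b (Y \<omega>) * br_ind w (Z \<omega>) a \<partial>M) + L * \<epsilon>"
    if "\<forall>a. affine_on_cube (w a)"
      and "\<forall>j a. \<bar>\<integral>\<omega>. (Y \<omega> $ j - Z \<omega> $ j) * br_ind w (Z \<omega>) a \<partial>M\<bar> \<le> \<epsilon>"
    for w :: "'act \<Rightarrow> real^'d \<Rightarrow> real" and a b
  proof -
    have "\<bar>(\<integral>\<omega>. u b (Y \<omega>) * br_ind w (Z \<omega>) a \<partial>M) - (\<integral>\<omega>. u b (Z \<omega>) * br_ind w (Z \<omega>) a \<partial>M)\<bar> \<le> L * \<epsilon>"
      using u_aff u_lip that(2) by (intro calibration_affine_integral_diff_le[OF _ _ Y Z br[OF that(1)]]) auto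
    then show "(\<integral>\<omega>. u b (Y \<omega>) * br_ind w (Z \<omega>) a \<partial>M) \<le> (\<integral>\<omega>. u b (Z \<omega>) * br_ind w (Z \<omega>) a \<partial>M) + L * \<epsilon>"
      "(\<integral>\<omega>. u b (Z \<omega>) * br_ind w (Z \<omega>) a \<partial>M) \<le> (\<integral>\<omega>. u b (Y \<omega>) * br_ind w (Z \<omega>) a \<partial>M) + L * \<epsilon>"
      by (simp_all add: abs_le_iff)
  qed
  have "(\<integral>\<omega>. (\<Sum>a\<in>UNIV. u (\<phi> a) (Y \<omega>) * br_ind u' (Z \<omega>) a) \<partial>M)
      \<le> (\<integral>\<omega>. (\<Sum>a\<in>UNIV. u (\<phi> a) (Z \<omega>) * br_ind u' (Z \<omega>) a) \<partial>M) + real CARD('act) * (L * \<epsilon>)"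
    by (intro integral_sum_le_add_card) (simp_all add: swap int Y Z u'_aff calib')
  also have "\<dots> \<le> (\<integral>\<omega>. (\<Sum>a\<in>UNIV. u a (Z \<omega>) * br_ind u (Z \<omega>) a) \<partial>M) + real CARD('act) * (L * \<epsilon>)"
  proof (intro add_right_mono integral_mono)
    show "(\<Sum>a\<in>UNIV. u (\<phi> a) (Z \<omega>) * br_ind u' (Z \<omega>) a) \<le> (\<Sum>a\<in>UNIV. u a (Z \<omega>) * br_ind u (Z \<omega>) a)"
      for \<omega>
      unfolding sum_mult_br_ind by (rule best_resp_maximal)
  qed (simp_all add: int Z u_aff u'_aff)
  also have "\<dots> \<le> (\<integral>\<omega>. (\<Sum>a\<in>UNIV. u a (Y \<omega>) * br_ind u (Z \<omega>) a) \<partial>M)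
      + real CARD('act) * (L * \<epsilon>) + real CARD('act) * (L * \<epsilon>)"
    by (intro add_right_mono integral_sum_le_add_card) (simp_all add: swap int Y Z u_aff calib)
  finally show ?thesis
    by (simp add: algebra_simps)
qed

theorem theorem7:
  fixes D :: "('x \<times> (real^'d)) measure"
    and f :: "('x \<Rightarrow> real^'d) measure"
    and H :: "('x \<Rightarrow> real^'d) set"
    and v :: "nat \<Rightarrow> 'a::{finite,linorder} \<Rightarrow> real^'d \<Rightarrow> real"
    and N :: nat and L \<epsilon> :: real
    and i i' :: nat and \<phi> :: "'a \<Rightarrow> 'a"
  assumes probD: "prob_space D"
    and probf: "prob_space f"
    and D_labels: "\<forall>p\<in>space D. snd p \<in> cube"
    and snd_meas: "snd \<in> borel_measurable D"
    and H_range: "\<forall>h\<in>H. \<forall>x. h x \<in> cube"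
    and f_on_H: "space f \<subseteq> H"
    and eval_meas: "(\<lambda>(h, p). h (fst p)) \<in> borel_measurable (f \<Otimes>\<^sub>M D)"
    and v_range: "\<forall>k<N. \<forall>a. \<forall>y\<in>cube. 0 \<le> v k a y \<and> v k a y \<le> 1"
    and v_lin: "\<forall>k<N. \<forall>a. affine_on_cube (v k a)"
    and v_lip: "\<forall>k<N. \<forall>a. \<forall>y1\<in>cube. \<forall>y2\<in>cube. \<bar>v k a y1 - v k a y2\<bar> \<le> L * linf (y1 - y2)"
    and calib: "\<forall>k<N. \<forall>j. \<forall>a.
       \<bar>\<integral>h. (\<integral>p. (snd p $ j - h (fst p) $ j) * br_ind (v k) (h (fst p)) a \<partial>D) \<partial>f\<bar> \<le> \<epsilon>"
    and i: "i < N" and i': "i' < N"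
  shows "(\<integral>h. (\<integral>p. (\<Sum>a\<in>UNIV. v i (\<phi> a) (snd p) * br_ind (v i') (h (fst p)) a) \<partial>D) \<partial>f)
         \<le> (\<integral>h. (\<integral>p. (\<Sum>a\<in>UNIV. v i a (snd p) * br_ind (v i) (h (fst p)) a) \<partial>D) \<partial>f)
            + 2 * L * real CARD('a) * \<epsilon>"
proof -
  interpret pf: prob_space f by fact
  interpret pD: prob_space D by fact
  interpret pp: pair_prob_space f D ..
  define Y where "Y = (\<lambda>\<omega>::('x \<Rightarrow> real^'d) \<times> 'x \<times> (real^'d). snd (snd \<omega>))"
  define Z where "Z = (\<lambda>\<omega>::('x \<Rightarrow> real^'d) \<times> 'x \<times> (real^'d). fst \<omega> (fst (snd \<omega>)))"
  have YZ: "Y \<in> borel_measurable (f \<Otimes>\<^sub>M D)" "\<forall>\<omega>\<in>space (f \<Otimes>\<^sub>M D). Y \<omega> \<in> cube"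
    "Z \<in> borel_measurable (f \<Otimes>\<^sub>M D)" "\<forall>\<omega>\<in>space (f \<Otimes>\<^sub>M D). Z \<omega> \<in> cube"
    using measurable_compose[OF measurable_snd snd_meas] D_labels eval_meas H_range f_on_H
    by (auto simp: Y_def Z_def space_pair_measure case_prod_beta')
  have v_aff: "\<forall>a. affine_on_cube (v k a)" if "k < N" for k
    using v_lin that by blast
  have br: "(\<lambda>\<omega>. br_ind (v k) (Z \<omega>) a) \<in> borel_measurable (f \<Otimes>\<^sub>M D)" if "k < N" for k a
    using br_ind_affine_measurable[OF v_aff[OF that] YZ(3,4)] .
  have regret_integrable:
    "integrable (f \<Otimes>\<^sub>M D) (\<lambda>\<omega>. \<Sum>a\<in>UNIV. v i (\<psi> a) (Y \<omega>) * br_ind (v k) (Z \<omega>) a)"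
    if "k < N" for k and \<psi> :: "'a \<Rightarrow> 'a"
    by (intro Bochner_Integration.integrable_sum pp.integrable_affine_on_cube_mult[OF _ YZ(1,2)]
        br[OF that]) (simp_all add: v_aff[OF i] abs_br_ind_le)
  have calib_pair: "\<forall>j a. \<bar>\<integral>\<omega>. (Y \<omega> $ j - Z \<omega> $ j) * br_ind (v k) (Z \<omega>) a \<partial>(f \<Otimes>\<^sub>M D)\<bar> \<le> \<epsilon>"
    if "k < N" for k
    using pp.integral_fst'[OF pp.integrable_cube_diff_mult[OF YZ br[OF that]]] calib[rule_format, OF that]
    by (simp add: Y_def Z_def abs_br_ind_le)
  have "(\<integral>\<omega>. (\<Sum>a\<in>UNIV. v i (\<phi> a) (Y \<omega>) * br_ind (v i') (Z \<omega>) a) \<partial>(f \<Otimes>\<^sub>M D))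
      \<le> (\<integral>\<omega>. (\<Sum>a\<in>UNIV. v i a (Y \<omega>) * br_ind (v i) (Z \<omega>) a) \<partial>(f \<Otimes>\<^sub>M D))
        + 2 * L * real CARD('a) * \<epsilon>"
    using v_lip i by (intro pp.decision_calibrated_swap_regret_le YZ v_aff calib_pair i i') auto
  then show ?thesis
    using pp.integral_fst'[OF regret_integrable[OF i', of \<phi>]]
      pp.integral_fst'[OF regret_integrable[OF i, of id]]
    by (simp add: Y_def Z_def)
qed

end
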